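(* In the setting of the context, suppose that $\mu_0$ has finite total mass density, i.e. $\sum_{n\ge1}x_n2^{-n}<\infty$. Let $(\mu^+_t)_{t\ge0}$ be a solution of Smoluchowski's equation with kernel $K$ starting from $\mu_0$, supported on $I$, such that $\mu^+_t(\{x:n(x)=n\})=m^+_n(t)$ for all $n\ge1$, $t\ge0$. Then $(\mu^+_t)$ is conservative: $\int_Ex\,\mu^+_t(dx)=\int_Ex\,\mu_0(dx)$ for all $t\ge0$.
   Context: $E=(0,\infty)$; $\lambda_n=8^n$. Let $x_1<x_2<\cdots$ be increasing in $(0,\infty)$ and linearly independent over $\mathbb Z$. $I$ is the set of $x\in E$ of the form $x=x_n+k_1x_1+\dots+k_{n-1}x_{n-1}$, $n\ge1$, $k_i\in\mathbb Z$; for such $x$, $n(x)=n$; $n(x)=0$ for $x\notin I$. $K(x,y)=8^n$ if $\{n(x),n(y)\}=\{n,n+1\}$ for some $n\ge1$, and $0$ otherwise. $\mu_0=\sum_{n\ge1}2^{-n}\varepsilon_{x_n}$. For $M\ge1$, $m^M$ is the solution of $\frac{d}{dt}m_n=-\lambda_nm_nm_{n+1}$ ($n\ge1$) with $m^M_n(0)=2^{-n}$ for $n\le M$ and $0$ for $n>M$; $m^+_n(t)=\lim_{N\to\infty}m^{2N}_n(t)$ (this limit exists and solves the same system with $m^+_n(0)=2^{-n}$). A solution of Smoluchowski's equation starting from $\mu_0$ is a map $t\mapsto\mu_t$ into non-negative Radon measures on $E$ with: $\int x1_{x\le1}d\mu_0<\infty$; $t\mapsto\mu_t(B)$ measurable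 for compact $B$; $\int_0^t\int_{B\times E}Kd\mu_sd\mu_s ds<\infty$; and for all $t$, for bounded measurable $f$ of compact support and for $f(x)=x1_{x\le1}$, $\langle f,\mu_t\rangle=\langle f,\mu_0\rangle+\frac12\int_0^t\int\{f(x+y)-f(x)-f(y)\}K(x,y)\mu_s(dx)\mu_s(dy)ds$. *)

theory Defs
  imports "HOL-Analysis.Analysis" "HOL-Probability.Probability"
begin

(* The sequence x_1 < x_2 < ... is modelled as x :: nat => real; the value x 0 is
   irrelevant (all conditions only concern indices n >= 1). E = (0,oo) = {0<..}. *)

definition admissible_seq :: "(nat \<Rightarrow> real) \<Rightarrow> bool" where
  "admissible_seq x \<longleftrightarrow>
     0 < x 1 \<and> (\<forall>n\<ge>1. x n < x (Suc n)) \<and>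
     (\<forall>(N::nat) (k::nat \<Rightarrow> int).
        (\<Sum>i=1..N. of_int (k i) * x i) = 0 \<longrightarrow> (\<forall>i\<in>{1..N}. k i = 0))"

definition in_level :: "(nat \<Rightarrow> real) \<Rightarrow> real \<Rightarrow> nat \<Rightarrow> bool" where
  "in_level x v n \<longleftrightarrow> n \<ge> 1 \<and> (\<exists>k::nat \<Rightarrow> int. v = x n + (\<Sum>i=1..<n. of_int (k i) * x i))"

definition Iset :: "(nat \<Rightarrow> real) \<Rightarrow> real set" where
  "Iset x = {v. 0 < v \<and> (\<exists>n. in_level x v n)}"

definition nI :: "(nat \<Rightarrow> real) \<Rightarrow> real \<Rightarrow> nat" where
  "nI x v = (if v \<in> Iset x then (THE n. in_level x v n) else 0)"

definition Kern :: "(nat \<Rightarrow> real) \<Rightarrow> real \<Rightarrow> real \<Rightarrow> real" where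
  "Kern x u v =
     (if \<exists>n\<ge>1. {nI x u, nI x v} = {n, Suc n}
      then 8 ^ (SOME n. n \<ge> 1 \<and> {nI x u, nI x v} = {n, Suc n}) else 0)"

(* mu_0 = sum_{n>=1} 2^{-n} delta_{x_n}, as image of a weighted counting measure on nat *)
definition mu0 :: "(nat \<Rightarrow> real) \<Rightarrow> real measure" where
  "mu0 x = distr (density (count_space UNIV)
                    (\<lambda>n::nat. if n \<ge> 1 then ennreal ((1/2) ^ n) else 0)) borel x"

definition ode_sol :: "(nat \<Rightarrow> real \<Rightarrow> real) \<Rightarrow> bool" where
  "ode_sol m \<longleftrightarrow> (\<forall>n\<ge>1. \<forall>t\<ge>0.
      (m n has_real_derivative (- (8 ^ n) * m n t * m (Suc n) t)) (at t within {0..}))"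

definition test_fns :: "(real \<Rightarrow> real) set" where
  "test_fns = {f. f \<in> borel_measurable borel \<and> bounded (range f) \<and>
                  (\<exists>B. compact B \<and> B \<subseteq> {0<..} \<and> (\<forall>v. v \<notin> B \<longrightarrow> f v = 0))}
              \<union> {(\<lambda>v. v * indicator {..1} v)}"

definition coag_term :: "(nat \<Rightarrow> real) \<Rightarrow> real measure \<Rightarrow> (real \<Rightarrow> real) \<Rightarrow> real \<times> real \<Rightarrow> real" where
  "coag_term x M f = (\<lambda>(u,v). (f (u + v) - f u - f v) * Kern x u v)"

(* Radon measures on E are modelled as Borel measures on the reals giving no mass
   to (-oo,0] and finite mass to compact subsets of (0,oo). *)
definition smol_solution :: "(nat \<Rightarrow> real) \<Rightarrow> (real \<Rightarrow> real measure) \<Rightarrow> bool" where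
  "smol_solution x mu \<longleftrightarrow>
     (\<forall>t\<ge>0. sets (mu t) = sets borel \<and> emeasure (mu t) {..0} = 0 \<and>
             (\<forall>B. compact B \<and> B \<subseteq> {0<..} \<longrightarrow> emeasure (mu t) B < \<infinity>)) \<and>
     (\<integral>\<^sup>+ v. ennreal (v * indicator {..1} v) \<partial>mu0 x) < \<infinity> \<and>
     (\<forall>B. compact B \<and> B \<subseteq> {0<..} \<longrightarrow>
          (\<lambda>t. emeasure (mu t) B) \<in> borel_measurable (restrict_space borel {0..})) \<and>
     (\<forall>B t. compact B \<and> B \<subseteq> {0<..} \<and> 0 \<le> t \<longrightarrow>
          (\<integral>\<^sup>+ s. indicator {0..t} s *
              (\<integral>\<^sup>+ p. indicator B (fst p) * ennreal (Kern x (fst p) (snd p)) \<partial>(mu s \<Otimes>\<^sub>M mu s))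
            \<partial>lborel) < \<infinity>) \<and>
     (\<forall>t\<ge>0. \<forall>f\<in>test_fns.
          integrable (mu t) f \<and>
          (AE s in lborel. s \<in> {0..t} \<longrightarrow> integrable (mu s \<Otimes>\<^sub>M mu s) (coag_term x (mu s) f)) \<and>
          set_integrable lborel {0..t} (\<lambda>s. \<integral>p. coag_term x (mu s) f p \<partial>(mu s \<Otimes>\<^sub>M mu s)) \<and>
          (\<integral>v. f v \<partial>mu t) = (\<integral>v. f v \<partial>mu0 x) +
             1/2 * (LINT s:{0..t}|lborel. (\<integral>p. coag_term x (mu s) f p \<partial>(mu s \<Otimes>\<^sub>M mu s))))"

end

(*
  Write M0 = (SUM n. 2^-n x_n) and a_i = 2^-i x_i.  Testing the weak form with truncations of
  v |-> v, the coagulation term is nonpositive, so the mass of mu_t never exceeds M0.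

  For the converse, let D_n(t) = a_1 + ... + a_n - (mass of mu_t on the levels 1..n).  As K only
  joins levels n and n+1, and the sum then lies again in level n+1, D_n(t) is the time integral
  of the flux 8^n A_n(s) m+_(n+1)(s) out of level n, A_n being the mass of mu_s on level n.
  In the truncated systems with M = 2N the top level is constant, every even level keeps at
  least half of its initial size, and this forces the odd level 2k+1 to decay like
  exp(-16^k s); the bound passes to m+.  So the flux out of level 2k integrates to at most half
  of the mass that can be present there, giving D_2k(t) <= beta_k with
  beta_(k+1) = (a_(2k+2) + a_(2k+1) + beta_k) / 2.  Since a_i -> 0 also beta_k -> 0, and the
  mass of mu_t is at least a_1 + ... + a_2k - beta_k for every k.
*)

theory Submission
  imports Defs
begin

section \<open>Levels\<close>

lemma admissible_seq_pos:
  assumes "admissible_seq x" "n \<ge> 1"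
  shows "x n > 0"
  using assms(2)
proof (induction n rule: dec_induct[of 1])
  case base
  show ?case using assms(1) by (simp add: admissible_seq_def)
next
  case (step n)
  then show ?case using assms(1) by (fastforce simp: admissible_seq_def)
qed

lemma sum_extend_by_zero:
  fixes x :: "nat \<Rightarrow> real"
  assumes "n \<le> N"
  shows "(\<Sum>i=1..N. of_int (if i \<le> n then k i else 0) * x i) = (\<Sum>i=1..n. of_int (k i) * x i)"
  using assms by (intro sum.mono_neutral_cong_right) auto

lemma in_level_iff:
  "in_level x v n \<longleftrightarrow> n \<ge> 1 \<and> (\<exists>k. k n = 1 \<and> v = (\<Sum>i=1..n. of_int (k i) * x i))"
proof -
  have split: "(\<Sum>i=1..n. f i) = f n + (\<Sum>i=1..<n. f i)" if "n \<ge> 1" for f :: "nat \<Rightarrow> real"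
  proof -
    have "{1..n} = insert n {1..<n}" using that by auto
    then show ?thesis by simp
  qed
  show ?thesis
  proof
    assume "in_level x v n"
    then obtain k where n: "n \<ge> 1" and v: "v = x n + (\<Sum>i=1..<n. of_int (k i) * x i)"
      by (auto simp: in_level_def)
    have "(\<Sum>i=1..n. of_int ((k(n := 1)) i) * x i) = v"
      unfolding split[OF n] v by (auto intro!: sum.cong)
    then show "n \<ge> 1 \<and> (\<exists>k. k n = 1 \<and> v = (\<Sum>i=1..n. of_int (k i) * x i))"
      using n by (intro conjI exI[of _ "k(n := 1)"]) auto
  next
    assume "n \<ge> 1 \<and> (\<exists>k. k n = 1 \<and> v = (\<Sum>i=1..n. of_int (k i) * x i))"
    then obtain k where n: "n \<ge> 1" and kn: "k n = 1" and v: "v = (\<Sum>i=1..n. of_int (k i) * x i)"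
      by blast
    have "v = x n + (\<Sum>i=1..<n. of_int (k i) * x i)" unfolding v split[OF n] kn by simp
    then show "in_level x v n" using n by (auto simp: in_level_def)
  qed
qed

lemma in_level_unique:
  assumes adm: "admissible_seq x" and "in_level x v n" "in_level x v m"
  shows "n = m"
proof -
  have False if lt: "n < m" and vn: "in_level x v n" and vm: "in_level x v m" for n m
  proof -
    obtain k k' where n: "n \<ge> 1" and m: "k' m = 1"
      and v: "v = (\<Sum>i=1..n. of_int (k i) * x i)" "v = (\<Sum>i=1..m. of_int (k' i) * x i)"
      using vn vm unfolding in_level_iff by blast
    define c where "c i = (if i \<le> n then k i else 0) - k' i" for i
    have "(\<Sum>i=1..m. of_int (c i) * x i)
        = (\<Sum>i=1..m. of_int (if i \<le> n then k i else 0) * x i) - (\<Sum>i=1..m. of_int (k' i) * x i)"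
      by (simp add: c_def algebra_simps sum_subtractf)
    also have "\<dots> = 0" using sum_extend_by_zero[of n m k x] lt v by simp
    finally have "\<forall>i\<in>{1..m}. c i = 0" using adm unfolding admissible_seq_def by blast
    moreover have "c m = -1" using lt m by (simp add: c_def)
    ultimately show False using lt n by force
  qed
  then show ?thesis using assms(2,3) by (metis linorder_neqE_nat)
qed

lemma nI_eqI:
  assumes "admissible_seq x" "v > 0" "in_level x v n"
  shows "nI x v = n"
  using assms in_level_unique[OF assms(1)]
  by (auto simp: nI_def Iset_def intro!: the_equality)

lemma nI_pos_imp:
  assumes adm: "admissible_seq x" and "nI x v \<ge> 1"
  shows "v > 0" "in_level x v (nI x v)"
proof -
  have "v \<in> Iset x" using assms(2) by (auto simp: nI_def split: if_splits)
  then obtain n where "v > 0" "in_level x v n" by (auto simp: Iset_def)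
  then show "v > 0" "in_level x v (nI x v)" using nI_eqI[OF adm] by auto
qed

lemma nI_seq:
  assumes adm: "admissible_seq x" and "n \<ge> 1"
  shows "nI x (x n) = n"
  using assms admissible_seq_pos[OF adm]
  by (intro nI_eqI) (auto simp: in_level_def intro!: exI[of _ "\<lambda>_. 0"])

lemma nI_add_Suc:
  assumes adm: "admissible_seq x" and u: "nI x u = m" and m: "m \<ge> 1" and w: "nI x w = Suc m"
  shows "nI x (u + w) = Suc m"
proof -
  have "u > 0" "w > 0" "in_level x u m" "in_level x w (Suc m)"
    using nI_pos_imp[OF adm, of u] nI_pos_imp[OF adm, of w] u w m by auto
  then obtain k k' where "k' (Suc m) = 1"
      "u = (\<Sum>i=1..m. of_int (k i) * x i)" "w = (\<Sum>i=1..Suc m. of_int (k' i) * x i)"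
    and pos: "u > 0" "w > 0"
    unfolding in_level_iff by blast
  moreover define k'' where "k'' i = (if i \<le> m then k i else 0) + k' i" for i
  ultimately have "u + w = (\<Sum>i=1..Suc m. of_int (k'' i) * x i)" "k'' (Suc m) = 1"
    by (simp_all add: algebra_simps sum.distrib sum_extend_by_zero)
  then have "in_level x (u + w) (Suc m)" unfolding in_level_iff by auto
  then show ?thesis using pos by (intro nI_eqI[OF adm]) auto
qed

lemma Kern_eq:
  "Kern x u w = (if nI x u \<ge> 1 \<and> nI x w = Suc (nI x u) then 8 ^ nI x u
     else if nI x w \<ge> 1 \<and> nI x u = Suc (nI x w) then 8 ^ nI x w else 0)"
proof -
  have pair: "{a, b} = {n, Suc n} \<longleftrightarrow> (a = n \<and> b = Suc n) \<or> (a = Suc n \<and> b = n)" for a b n :: nat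
    by (auto simp: doubleton_eq_iff)
  have some: "(SOME n. n \<ge> 1 \<and> {nI x u, nI x w} = {n, Suc n}) = n"
    if "n \<ge> 1 \<and> {nI x u, nI x w} = {n, Suc n}" for n
    using that by (intro some_equality) (auto simp: pair)
  show ?thesis
  proof (cases "nI x u \<ge> 1 \<and> nI x w = Suc (nI x u)")
    case True
    then show ?thesis using some[of "nI x u"] unfolding Kern_def by auto
  next
    case u: False
    show ?thesis
    proof (cases "nI x w \<ge> 1 \<and> nI x u = Suc (nI x w)")
      case True
      then show ?thesis using u some[of "nI x w"] unfolding Kern_def by (auto simp: insert_commute)
    qed (use u in \<open>auto simp: Kern_def pair\<close>)
  qed
qed

lemma Kern_nonneg: "Kern x u w \<ge> 0"
  by (simp add: Kern_eq)

lemma Kern_nonzero_imp_pos: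
  assumes adm: "admissible_seq x" and "Kern x u w \<noteq> 0"
  shows "u > 0" "w > 0"
  using assms(2) nI_pos_imp[OF adm, of u] nI_pos_imp[OF adm, of w]
  by (auto simp: Kern_eq split: if_splits)

lemma countable_level: "countable {v. in_level x v n}"
proof -
  have "{v. in_level x v n} \<subseteq> (\<lambda>l. x n + (\<Sum>i=1..<n. of_int (l ! i) * x i)) ` UNIV"
  proof
    fix v assume "v \<in> {v. in_level x v n}"
    then obtain k where k: "v = x n + (\<Sum>i=1..<n. of_int (k i) * x i)" by (auto simp: in_level_def)
    then have "v = x n + (\<Sum>i=1..<n. of_int (map k [0..<n] ! i) * x i)" by simp
    then show "v \<in> (\<lambda>l. x n + (\<Sum>i=1..<n. of_int (l ! i) * x i)) ` UNIV" by blast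
  qed
  then show ?thesis by (rule countable_subset) simp
qed

lemma sets_level:
  assumes adm: "admissible_seq x"
  shows "{v. nI x v = m} \<in> sets borel"
proof -
  have pos: "{v. nI x v = k} \<in> sets borel" if "k \<ge> 1" for k
  proof -
    have "{v. nI x v = k} = {v. v > 0 \<and> in_level x v k}"
      using that nI_pos_imp[OF adm] nI_eqI[OF adm] by fastforce
    also have "\<dots> \<in> sets borel"
      by (rule sets.countable[OF _ countable_subset[OF _ countable_level]]) auto
    finally show ?thesis .
  qed
  show ?thesis
  proof (cases "m \<ge> 1")
    case False
    then have "{v. nI x v = m} = space borel - (\<Union>k\<in>{1..}. {v. nI x v = k})" by auto
    also have "\<dots> \<in> sets borel" using pos by (intro sets.compl_sets sets.countable_UN') auto
    finally show ?thesis .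
  qed (rule pos)
qed

section \<open>The truncated moment system\<close>

lemma DERIV_within_imp_continuous_on:
  fixes f :: "real \<Rightarrow> real"
  assumes "\<And>t. t \<ge> 0 \<Longrightarrow> (f has_real_derivative f' t) (at t within {0..})"
  shows "continuous_on {0..} f"
  unfolding continuous_on_eq_continuous_within using assms DERIV_continuous by fastforce

lemma DERIV_within_nonneg_imp_increasing:
  fixes f :: "real \<Rightarrow> real"
  assumes d: "\<And>t. t \<ge> 0 \<Longrightarrow> (f has_real_derivative f' t) (at t within {0..})"
    and nonneg: "\<And>t. t \<ge> 0 \<Longrightarrow> f' t \<ge> 0" and "0 \<le> a" "a \<le> b"
  shows "f a \<le> f b"
proof (rule DERIV_nonneg_imp_increasing_open[OF \<open>a \<le> b\<close>])
  fix y assume y: "a < y" "y < b"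
  then have "(f has_real_derivative f' y) (at y within {0<..})"
    using \<open>0 \<le> a\<close> by (intro has_field_derivative_subset[OF d]) auto
  moreover have "at y within {0<..} = at y" using y \<open>0 \<le> a\<close> by (intro at_within_open) auto
  ultimately show "\<exists>z. DERIV f y :> z \<and> z \<ge> 0" using nonneg y \<open>0 \<le> a\<close> by auto
next
  show "continuous_on {a..b} f"
    by (rule continuous_on_subset[OF DERIV_within_imp_continuous_on[OF d]]) (use \<open>0 \<le> a\<close> in auto)
qed

lemma DERIV_within_nonpos_imp_decreasing:
  fixes f :: "real \<Rightarrow> real"
  assumes d: "\<And>t. t \<ge> 0 \<Longrightarrow> (f has_real_derivative f' t) (at t within {0..})"
    and nonpos: "\<And>t. t \<ge> 0 \<Longrightarrow> f' t \<le> 0" and "0 \<le> a" "a \<le> b"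
  shows "f b \<le> f a"
proof -
  have "- f a \<le> - f b"
    by (rule DERIV_within_nonneg_imp_increasing[where f = "\<lambda>t. - f t" and f' = "\<lambda>t. - f' t"])
       (use d nonpos assms(3,4) in \<open>auto intro: DERIV_minus\<close>)
  then show ?thesis by simp
qed

lemma ode_sol_exp_formula:
  assumes ode: "ode_sol m" and n: "n \<ge> 1" and t: "t \<ge> 0"
  shows "m n t = m n 0 * exp (- (8 ^ n) * integral {0..t} (m (Suc n)))"
proof -
  have "continuous_on {0..} (m (Suc n))"
    by (rule DERIV_within_imp_continuous_on) (use ode in \<open>auto simp: ode_sol_def\<close>)
  then have cont: "continuous_on {0..t} (m (Suc n))"
    by (rule continuous_on_subset) auto
  define g where "g s = m n s * exp (8 ^ n * integral {0..s} (m (Suc n)))" for s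
  have "\<exists>c. \<forall>s\<in>{0..t}. g s = c"
  proof (rule has_field_derivative_zero_constant)
    fix s assume s: "s \<in> {0..t}"
    have d1: "(m n has_real_derivative (- (8 ^ n) * m n s * m (Suc n) s)) (at s within {0..t})"
      by (rule has_field_derivative_subset[of _ _ _ "{0..}"]) (use ode n s in \<open>auto simp: ode_sol_def\<close>)
    have d2: "((\<lambda>s. exp (8 ^ n * integral {0..s} (m (Suc n)))) has_real_derivative
        exp (8 ^ n * integral {0..s} (m (Suc n))) * (8 ^ n * m (Suc n) s)) (at s within {0..t})"
      by (rule DERIV_chain2[OF DERIV_exp DERIV_cmult[OF integral_has_real_derivative[OF cont s]]])
    show "(g has_real_derivative 0) (at s within {0..t})"
      using DERIV_mult[OF d1 d2] unfolding g_def by (simp add: algebra_simps)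
  qed simp
  then obtain c where "\<forall>s\<in>{0..t}. g s = c" by blast
  then have "g t = g 0" using t by auto
  then show ?thesis by (simp add: g_def exp_minus field_simps)
qed

lemma pow_8_mult_pow_half: "(8::real) ^ (2 * k) * (1/2) ^ (2 * k) = 16 ^ k"
proof -
  have "(8::real) ^ (2 * k) * (1/2) ^ (2 * k) = 4 ^ (2 * k)"
    by (simp add: power_mult_distrib[symmetric])
  also have "\<dots> = 16 ^ k" by (simp add: power_mult)
  finally show ?thesis .
qed

locale truncated_solution =
  fixes m :: "nat \<Rightarrow> real \<Rightarrow> real" and M :: nat
  assumes ode: "ode_sol m" and M: "M \<ge> 1"
    and init: "\<And>n. n \<ge> 1 \<Longrightarrow> m n 0 = (if n \<le> M then (1/2) ^ n else 0)"
begin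

lemma has_deriv:
  "n \<ge> 1 \<Longrightarrow> t \<ge> 0 \<Longrightarrow> (m n has_real_derivative (- (8 ^ n) * m n t * m (Suc n) t)) (at t within {0..})"
  using ode by (auto simp: ode_sol_def)

lemma nonneg: "n \<ge> 1 \<Longrightarrow> t \<ge> 0 \<Longrightarrow> m n t \<ge> 0"
  using ode_sol_exp_formula[OF ode, of n t] init[of n] by auto

lemma vanish_above: "M < n \<Longrightarrow> t \<ge> 0 \<Longrightarrow> m n t = 0"
  using ode_sol_exp_formula[OF ode, of n t] init[of n] M by auto

lemma decreasing: "n \<ge> 1 \<Longrightarrow> 0 \<le> s \<Longrightarrow> s \<le> t \<Longrightarrow> m n t \<le> m n s"
  by (rule DERIV_within_nonpos_imp_decreasing[OF has_deriv])
     (auto intro!: mult_nonneg_nonneg nonneg simp: mult_le_0_iff)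

lemma le_initial: "n \<ge> 1 \<Longrightarrow> 0 \<le> t \<Longrightarrow> m n t \<le> (1/2) ^ n"
  using decreasing[of n 0 t] init[of n] vanish_above[of n t] by (cases "n \<le> M") auto

lemma top_level_const:
  assumes "t \<ge> 0"
  shows "m M t = (1/2) ^ M"
proof -
  have "(m M has_real_derivative 0) (at s within {0..})" if "s \<in> {0..}" for s
    using has_deriv[of M s] vanish_above[of "Suc M" s] M that by auto
  then obtain c where "\<forall>s\<in>{0..}. m M s = c"
    using has_field_derivative_zero_constant[of "{0..}" "m M"] by auto
  then have "m M t = m M 0" using assms by auto
  then show ?thesis using init[of M] M by simp
qed

lemma odd_level_decay:
  assumes MN: "M = 2 * N" and kN: "k + 1 \<le> N"
    and even: "\<And>t. t \<ge> 0 \<Longrightarrow> m (2 * k + 2) t \<ge> (1/2) ^ (2 * k + 2) / 2"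
    and s: "s \<ge> 0"
  shows "m (2 * k + 1) s \<le> (1/2) ^ (2 * k + 1) * exp (- (16 ^ k) * s)"
proof -
  define g where "g s = m (2 * k + 1) s * exp (16 ^ k * s)" for s
  have "g s \<le> g 0"
  proof (rule DERIV_within_nonpos_imp_decreasing[where f = g])
    fix t :: real assume t: "t \<ge> 0"
    have "((\<lambda>s. exp (16 ^ k * s)) has_real_derivative exp (16 ^ k * t) * (16 ^ k * 1)) (at t within {0..})"
      by (rule DERIV_chain2[OF DERIV_exp DERIV_cmult[OF DERIV_ident]])
    from DERIV_mult[OF has_deriv[of "2 * k + 1" t] this] t
    show "(g has_real_derivative
        exp (16 ^ k * t) * m (2 * k + 1) t * (16 ^ k - 8 ^ (2 * k + 1) * m (2 * k + 2) t)) (at t within {0..})"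
      unfolding g_def by (simp add: algebra_simps)
    have "(16::real) ^ k = (8 ^ (2 * k) * (1/2) ^ (2 * k)) * (8 * (1/2) ^ 3)"
      unfolding pow_8_mult_pow_half by (simp add: eval_nat_numeral)
    also have "\<dots> = 8 ^ (2 * k + 1) * ((1/2) ^ (2 * k + 2) / 2)"
      by (simp add: power_add eval_nat_numeral)
    also have "\<dots> \<le> 8 ^ (2 * k + 1) * m (2 * k + 2) t"
      using even[OF t] by (intro mult_left_mono) auto
    finally show "exp (16 ^ k * t) * m (2 * k + 1) t * (16 ^ k - 8 ^ (2 * k + 1) * m (2 * k + 2) t) \<le> 0"
      using nonneg[of "2 * k + 1" t] t by (simp add: mult_nonneg_nonpos)
  qed (use s in auto)
  moreover have "g 0 = (1/2) ^ (2 * k + 1)" using init[of "2 * k + 1"] MN kN by (simp add: g_def)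
  ultimately have "m (2 * k + 1) s * exp (16 ^ k * s) \<le> (1/2) ^ (2 * k + 1)" by (simp add: g_def)
  then show ?thesis by (simp add: exp_minus field_simps)
qed

lemma even_level_bound_from_odd:
  assumes MN: "M = 2 * N" and k: "1 \<le> k" "k \<le> N"
    and odd: "\<And>s. s \<ge> 0 \<Longrightarrow> m (2 * k + 1) s \<le> (1/2) ^ (2 * k + 1) * exp (- (16 ^ k) * s)"
    and t: "t \<ge> 0"
  shows "m (2 * k) t \<ge> (1/2) ^ (2 * k) / 2"
proof -
  define E where "E s = exp (- (1/2) * exp (- (16 ^ k) * s))" for s :: real
  define h where "h s = m (2 * k) s * E s" for s
  have "h 0 \<le> h t"
  proof (rule DERIV_within_nonneg_imp_increasing[where f = h])
    fix s :: real assume s: "s \<ge> 0"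
    have "((\<lambda>s. - (1/2) * exp (- (16 ^ k) * s)) has_real_derivative
        - (1/2) * (exp (- (16 ^ k) * s) * (- (16 ^ k) * 1))) (at s within {0..})"
      by (rule DERIV_cmult[OF DERIV_chain2[OF DERIV_exp DERIV_cmult[OF DERIV_ident]]])
    from DERIV_chain2[OF DERIV_exp this]
    have "(E has_real_derivative E s * (- (1/2) * (exp (- (16 ^ k) * s) * (- (16 ^ k) * 1))))
        (at s within {0..})"
      unfolding E_def .
    from DERIV_mult[OF has_deriv[of "2 * k" s] this] s k
    show "(h has_real_derivative
        E s * m (2 * k) s * ((1/2) * 16 ^ k * exp (- (16 ^ k) * s) - 8 ^ (2 * k) * m (2 * k + 1) s))
        (at s within {0..})"
      unfolding h_def by (simp add: algebra_simps)
    have "8 ^ (2 * k) * m (2 * k + 1) s \<le> 8 ^ (2 * k) * ((1/2) ^ (2 * k + 1) * exp (- (16 ^ k) * s))"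
      using odd[OF s] by (intro mult_left_mono) auto
    also have "\<dots> = (1/2) * (8 ^ (2 * k) * (1/2) ^ (2 * k)) * exp (- (16 ^ k) * s)"
      by simp
    finally have "(1/2) * 16 ^ k * exp (- (16 ^ k) * s) - 8 ^ (2 * k) * m (2 * k + 1) s \<ge> 0"
      unfolding pow_8_mult_pow_half by simp
    moreover have "E s * m (2 * k) s \<ge> 0" using nonneg[of "2 * k" s] s k by (simp add: E_def)
    ultimately show
      "E s * m (2 * k) s * ((1/2) * 16 ^ k * exp (- (16 ^ k) * s) - 8 ^ (2 * k) * m (2 * k + 1) s) \<ge> 0"
      by simp
  qed (use t in auto)
  moreover have "h 0 = (1/2) ^ (2 * k) * exp (- (1/2))"
    using init[of "2 * k"] MN k by (simp add: h_def E_def)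
  moreover have "h t \<le> m (2 * k) t"
    using nonneg[of "2 * k" t] t k by (simp add: h_def E_def mult_left_le)
  moreover have "(1/2) ^ (2 * k) / 2 \<le> (1/2::real) ^ (2 * k) * exp (- (1/2))"
    using exp_ge_add_one_self[of "- (1/2) :: real"] by (simp add: divide_simps)
  ultimately show ?thesis by linarith
qed

lemma even_level_lower:
  assumes MN: "M = 2 * N" and k: "1 \<le> k" "k \<le> N" and t: "t \<ge> 0"
  shows "m (2 * k) t \<ge> (1/2) ^ (2 * k) / 2"
proof -
  have "\<forall>t\<ge>0. m (2 * k) t \<ge> (1/2) ^ (2 * k) / 2"
    using k(2,1)
  proof (induction k rule: inc_induct)
    case base
    show ?case using top_level_const MN by simp
  next
    case (step j)
    have "m (2 * j + 1) s \<le> (1/2) ^ (2 * j + 1) * exp (- (16 ^ j) * s)" if "s \<ge> 0" for s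
      using step that by (intro odd_level_decay[OF MN]) auto
    then show ?case using even_level_bound_from_odd[OF MN] step by auto
  qed
  then show ?thesis using t by blast
qed

lemma odd_level_upper:
  assumes MN: "M = 2 * N" and k: "k + 1 \<le> N" and s: "s \<ge> 0"
  shows "m (2 * k + 1) s \<le> (1/2) ^ (2 * k + 1) * exp (- (16 ^ k) * s)"
  using even_level_lower[OF MN, of "k + 1"] k s by (intro odd_level_decay[OF MN k]) auto

end

text \<open>In contrast to dominated convergence, the pointwise limit \<open>\<psi>\<close> need not be measurable;
  below it is the flux out of a level, which is not known to be measurable in time.\<close>

lemma set_integral_limit_le:
  fixes h :: "nat \<Rightarrow> 'a \<Rightarrow> real"
  assumes A: "A \<in> sets M" "emeasure M A < \<infinity>"
    and h: "\<And>j. set_integrable M A (h j)"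
    and h_lim: "AE s in M. s \<in> A \<longrightarrow> (\<lambda>j. h j s) \<longlonglongrightarrow> \<psi> s"
    and h_bound: "\<And>j. AE s in M. s \<in> A \<longrightarrow> \<bar>h j s\<bar> \<le> C"
    and lim: "(\<lambda>j. LINT s:A|M. h j s) \<longlonglongrightarrow> L"
    and \<Psi>: "set_integrable M A \<Psi>"
    and le: "AE s in M. s \<in> A \<longrightarrow> \<psi> s \<le> \<Psi> s"
  shows "L \<le> (LINT s:A|M. \<Psi> s)"
proof -
  let ?I = "indicator A :: 'a \<Rightarrow> real"
  define g where "g j s = max (?I s * h j s) (?I s * \<Psi> s)" for j s
  have hI: "integrable M (\<lambda>s. ?I s * h j s)" for j
    using h[of j] by (simp add: set_integrable_def)
  have \<Psi>I: "integrable M (\<lambda>s. ?I s * \<Psi> s)"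
    using \<Psi> by (simp add: set_integrable_def)
  have g: "integrable M (g j)" for j
    unfolding g_def using hI \<Psi>I by (rule integrable_max)
  have "(\<lambda>j. integral\<^sup>L M (g j)) \<longlonglongrightarrow> integral\<^sup>L M (\<lambda>s. ?I s * \<Psi> s)"
  proof (rule integral_dominated_convergence)
    show "integrable M (\<lambda>s. ?I s * \<bar>C\<bar> + \<bar>?I s * \<Psi> s\<bar>)"
      using A \<Psi>I by (intro Bochner_Integration.integrable_add integrable_mult_left) auto
    show "AE s in M. (\<lambda>j. g j s) \<longlonglongrightarrow> ?I s * \<Psi> s"
      using h_lim le
    proof eventually_elim
      case (elim s)
      show ?case
      proof (cases "s \<in> A")
        case True
        have "(\<lambda>j. max (h j s) (\<Psi> s)) \<longlonglongrightarrow> max (\<psi> s) (\<Psi> s)"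
          using elim True by (intro tendsto_max tendsto_const) auto
        then show ?thesis using True elim by (simp add: g_def max_absorb2)
      qed (simp add: g_def)
    qed
    show "AE s in M. norm (g j s) \<le> ?I s * \<bar>C\<bar> + \<bar>?I s * \<Psi> s\<bar>" for j
      using h_bound[of j] by eventually_elim (auto simp: g_def indicator_def)
  qed (use g \<Psi>I in auto)
  moreover have "(LINT s:A|M. h j s) \<le> integral\<^sup>L M (g j)" for j
    unfolding set_lebesgue_integral_def g_def using hI g[unfolded g_def]
    by (intro integral_mono) auto
  ultimately show ?thesis
    using lim unfolding set_lebesgue_integral_def by (intro LIMSEQ_le) auto
qed

lemma
  fixes f g :: "'a \<Rightarrow> real"
  assumes "sigma_finite_measure M1" "sigma_finite_measure M2"
    and f: "integrable M1 f" and g: "integrable M2 g"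
  shows integrable_product: "integrable (M1 \<Otimes>\<^sub>M M2) (\<lambda>p. f (fst p) * g (snd p))"
    and integral_product:
      "integral\<^sup>L (M1 \<Otimes>\<^sub>M M2) (\<lambda>p. f (fst p) * g (snd p)) = integral\<^sup>L M1 f * integral\<^sup>L M2 g"
proof -
  interpret pair_sigma_finite M1 M2 using assms(1,2) by (simp add: pair_sigma_finite_def)
  have [measurable]: "f \<in> borel_measurable M1" "g \<in> borel_measurable M2" using f g by auto
  show int: "integrable (M1 \<Otimes>\<^sub>M M2) (\<lambda>p. f (fst p) * g (snd p))"
  proof (rule Fubini_integrable)
    have "integrable M1 (\<lambda>x. \<bar>f x\<bar> * (\<integral>y. \<bar>g y\<bar> \<partial>M2))"
      using f by (intro integrable_mult_left) auto
    then show "integrable M1 (\<lambda>x. \<integral>y. norm (f (fst (x, y)) * g (snd (x, y))) \<partial>M2)"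
      by (simp add: abs_mult)
  qed (use g in auto)
  have "integral\<^sup>L (M1 \<Otimes>\<^sub>M M2) (\<lambda>p. f (fst p) * g (snd p)) = (\<integral>x. (\<integral>y. f x * g y \<partial>M2) \<partial>M1)"
    using integral_fst'[OF int] by simp
  then show "integral\<^sup>L (M1 \<Otimes>\<^sub>M M2) (\<lambda>p. f (fst p) * g (snd p)) = integral\<^sup>L M1 f * integral\<^sup>L M2 g"
    by simp
qed

lemma halving_recursion_tendsto_zero:
  fixes \<beta> e :: "nat \<Rightarrow> real"
  assumes rec: "\<And>k. \<beta> (Suc k) = (e k + \<beta> k) / 2" and nonneg: "\<And>k. \<beta> k \<ge> 0"
    and e: "e \<longlonglongrightarrow> 0"
  shows "\<beta> \<longlonglongrightarrow> 0"
proof (rule LIMSEQ_I)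
  fix r :: real assume r: "r > 0"
  obtain K where K: "\<And>k. k \<ge> K \<Longrightarrow> \<bar>e k\<bar> < r/2"
    using LIMSEQ_D[OF e, of "r/2"] r by auto
  have bound: "\<beta> (K + i) \<le> r/2 + (1/2) ^ i * \<beta> K" for i
  proof (induction i)
    case (Suc i)
    have "\<beta> (K + Suc i) = (e (K + i) + \<beta> (K + i)) / 2" using rec[of "K + i"] by simp
    also have "\<dots> \<le> (r/2 + (r/2 + (1/2) ^ i * \<beta> K)) / 2" using K[of "K + i"] Suc by auto
    finally show ?case by simp
  qed (use r in simp)
  have "(\<lambda>i. (1/2::real) ^ i * \<beta> K) \<longlonglongrightarrow> 0"
    by (rule tendsto_mult_left_zero[OF LIMSEQ_power_zero]) simp
  then obtain I where I: "\<And>i. i \<ge> I \<Longrightarrow> (1/2::real) ^ i * \<beta> K < r/2"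
    using LIMSEQ_D[of _ 0 "r/2"] r by fastforce
  have "norm (\<beta> n - 0) < r" if "n \<ge> K + I" for n
  proof -
    have "I \<le> n - K" "K + (n - K) = n" using that by auto
    then show ?thesis using bound[of "n - K"] I[of "n - K"] nonneg[of n] by simp
  qed
  then show "\<exists>n0. \<forall>n\<ge>n0. norm (\<beta> n - 0) < r" by blast
qed

lemma set_integral_exp_decay:
  fixes t c :: real
  assumes t: "t \<ge> 0" and c: "c > 0"
  shows "set_integrable lborel {0..t} (\<lambda>s. c * exp (- c * s))"
    and "(LINT s:{0..t}|lborel. c * exp (- c * s)) \<le> 1"
proof -
  show "set_integrable lborel {0..t} (\<lambda>s. c * exp (- c * s))"
    by (rule borel_integrable_atLeastAtMost') (intro continuous_intros)
  have "(LINT s:{0..t}|lborel. c * exp (- c * s)) = 1 - exp (- c * t)"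
    unfolding set_lebesgue_integral_def
  proof (subst integral_FTC_atLeastAtMost[OF t])
    fix s assume "0 \<le> s" "s \<le> t"
    have "((\<lambda>s. - exp (- c * s)) has_real_derivative - (exp (- c * s) * (- c * 1))) (at s within {0..t})"
      by (rule DERIV_minus[OF DERIV_chain2[OF DERIV_exp DERIV_cmult[OF DERIV_ident]]])
    then show "((\<lambda>s. - exp (- c * s)) has_vector_derivative c * exp (- c * s)) (at s within {0..t})"
      by (simp add: has_real_derivative_iff_has_vector_derivative[symmetric] mult.commute)
  qed (auto intro!: continuous_intros)
  then show "(LINT s:{0..t}|lborel. c * exp (- c * s)) \<le> 1" by simp
qed

definition window :: "nat \<Rightarrow> real set" where
  "window j = {1 / real (Suc j)..real (Suc j)}"

lemma window_pos: "window j \<subseteq> {0<..}"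
  by (auto simp: window_def intro: less_le_trans[of 0 "1 / real (Suc j)"])

lemma compact_window: "compact (window j)"
  by (simp add: window_def)

lemma eventually_in_window:
  assumes "v > 0"
  shows "eventually (\<lambda>j. v \<in> window j) sequentially"
proof -
  have "v \<in> window j" if "j \<ge> nat \<lceil>max v (1/v)\<rceil>" for j
  proof -
    have "real (Suc j) \<ge> v" "real (Suc j) \<ge> 1 / v" using that by linarith+
    then show ?thesis using assms by (simp add: window_def field_simps)
  qed
  then show ?thesis unfolding eventually_sequentially by blast
qed

locale level_solution =
  fixes x :: "nat \<Rightarrow> real" and mM :: "nat \<Rightarrow> nat \<Rightarrow> real \<Rightarrow> real"
    and mplus :: "nat \<Rightarrow> real \<Rightarrow> real" and mu :: "real \<Rightarrow> real measure"
  assumes adm: "admissible_seq x"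
    and mM_sol: "\<forall>M\<ge>1. ode_sol (mM M) \<and> (\<forall>n\<ge>1. mM M n 0 = (if n \<le> M then (1/2) ^ n else 0))"
    and mplus_lim: "\<forall>n\<ge>1. \<forall>t\<ge>0. (\<lambda>N. mM (2 * N) n t) \<longlonglongrightarrow> mplus n t"
    and finite_mass: "summable (\<lambda>n. x (Suc n) * (1/2) ^ Suc n)"
    and sol: "smol_solution x mu"
    and levels: "\<forall>n\<ge>1. \<forall>t\<ge>0. emeasure (mu t) {v. nI x v = n} = ennreal (mplus n t)"
begin

lemma truncated_solution_even: "N \<ge> 1 \<Longrightarrow> truncated_solution (mM (2 * N)) (2 * N)"
  using mM_sol by unfold_locales auto

lemma mplus_nonneg:
  assumes "n \<ge> 1" "t \<ge> 0"
  shows "mplus n t \<ge> 0"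
  using truncated_solution.nonneg[OF truncated_solution_even] assms
  by (intro LIMSEQ_le_const[OF mplus_lim[rule_format, OF assms]] exI[of _ 1]) auto

lemma mplus_le:
  assumes "n \<ge> 1" "t \<ge> 0"
  shows "mplus n t \<le> (1/2) ^ n"
  using truncated_solution.le_initial[OF truncated_solution_even] assms
  by (intro LIMSEQ_le_const2[OF mplus_lim[rule_format, OF assms]] exI[of _ 1]) auto

lemma mplus_odd_decay:
  assumes "s \<ge> 0"
  shows "mplus (2 * k + 1) s \<le> (1/2) ^ (2 * k + 1) * exp (- (16 ^ k) * s)"
proof (rule LIMSEQ_le_const2[OF mplus_lim[rule_format]])
  have "mM (2 * N) (2 * k + 1) s \<le> (1/2) ^ (2 * k + 1) * exp (- (16 ^ k) * s)" if "N \<ge> k + 1" for N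
    using that assms by (intro truncated_solution.odd_level_upper[OF truncated_solution_even refl]) auto
  then show "\<exists>N0. \<forall>N\<ge>N0. mM (2 * N) (2 * k + 1) s \<le> (1/2) ^ (2 * k + 1) * exp (- (16 ^ k) * s)"
    by blast
qed (use assms in auto)

lemma weak_form:
  assumes "t \<ge> 0" "f \<in> test_fns"
  shows "integrable (mu t) f"
    and "AE s in lborel. s \<in> {0..t} \<longrightarrow> integrable (mu s \<Otimes>\<^sub>M mu s) (coag_term x (mu s) f)"
    and "set_integrable lborel {0..t} (\<lambda>s. \<integral>p. coag_term x (mu s) f p \<partial>(mu s \<Otimes>\<^sub>M mu s))"
    and "(\<integral>v. f v \<partial>mu t) = (\<integral>v. f v \<partial>mu0 x) +
           1/2 * (LINT s:{0..t}|lborel. (\<integral>p. coag_term x (mu s) f p \<partial>(mu s \<Otimes>\<^sub>M mu s)))"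
  using sol assms unfolding smol_solution_def by blast+

lemma sets_mu: "t \<ge> 0 \<Longrightarrow> sets (mu t) = sets borel"
  using sol by (simp add: smol_solution_def)

lemma measurable_mu: "t \<ge> 0 \<Longrightarrow> f \<in> borel_measurable borel \<Longrightarrow> f \<in> borel_measurable (mu t)"
  using measurable_cong_sets[OF sets_mu refl] by blast

lemma measurable_mu_pair:
  "t \<ge> 0 \<Longrightarrow> f \<in> borel_measurable (borel \<Otimes>\<^sub>M borel) \<Longrightarrow> f \<in> borel_measurable (mu t \<Otimes>\<^sub>M mu t)"
  using measurable_cong_sets[OF sets_pair_measure_cong[OF sets_mu sets_mu] refl] by blast

lemma emeasure_mu_nonpos: "t \<ge> 0 \<Longrightarrow> emeasure (mu t) {..0} = 0"
  using sol by (simp add: smol_solution_def)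

lemma emeasure_mu_compact:
  "t \<ge> 0 \<Longrightarrow> compact B \<Longrightarrow> B \<subseteq> {0<..} \<Longrightarrow> emeasure (mu t) B < \<infinity>"
  using sol by (simp add: smol_solution_def)

lemma AE_mu_pos:
  assumes "t \<ge> 0"
  shows "AE v in mu t. v > 0"
proof (rule AE_I')
  show "{..0} \<in> null_sets (mu t)"
    using emeasure_mu_nonpos[OF assms] sets_mu[OF assms] by (auto simp: null_sets_def)
qed auto

lemma sigma_finite_mu:
  assumes t: "t \<ge> 0"
  shows "sigma_finite_measure (mu t)"
  unfolding sigma_finite_measure_def
proof (intro exI[of _ "insert {..0} (range window)"] conjI)
  show "insert {..0} (range window) \<subseteq> sets (mu t)"
    using sets_mu[OF t] by (simp add: window_def image_subset_iff)
  have "\<exists>j. v \<in> window j" if "v > 0" for v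
    using eventually_in_window[OF that] by (meson eventually_sequentially order_refl)
  then show "\<Union> (insert {..0} (range window)) = space (mu t)"
    using sets_eq_imp_space_eq[OF sets_mu[OF t]] by (force simp: not_le)
  show "\<forall>a\<in>insert {..0} (range window). emeasure (mu t) a \<noteq> \<infinity>"
    using emeasure_mu_nonpos[OF t] emeasure_mu_compact[OF t compact_window window_pos]
    by (auto simp: less_top[symmetric])
qed simp

lemma sets_level_mu: "t \<ge> 0 \<Longrightarrow> {v. nI x v = n} \<in> sets (mu t)"
  using sets_level[OF adm] sets_mu by simp

lemma measurable_nI[measurable]: "nI x \<in> borel \<rightarrow>\<^sub>M count_space UNIV"
proof (rule measurable_count_space_eq2_countable[THEN iffD2], safe)
  fix n
  have "nI x -` {n} \<inter> space borel = {v. nI x v = n}" by auto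
  then show "nI x -` {n} \<inter> space borel \<in> sets borel" using sets_level[OF adm] by simp
qed simp_all

lemma measure_level: "n \<ge> 1 \<Longrightarrow> t \<ge> 0 \<Longrightarrow> measure (mu t) {v. nI x v = n} = mplus n t"
  using levels mplus_nonneg by (simp add: measure_def)

definition init_weight :: "nat \<Rightarrow> real" where
  "init_weight n = (if n \<ge> 1 then (1/2) ^ n else 0)"

definition init_mass :: "nat \<Rightarrow> real" where
  "init_mass n = init_weight n * x n"

definition total_init_mass :: real where
  "total_init_mass = (\<Sum>n. init_mass n)"

abbreviation init_counting :: "nat measure" where
  "init_counting \<equiv> density (count_space UNIV) (\<lambda>n. ennreal (init_weight n))"

lemma mu0_eq: "mu0 x = distr init_counting borel x"
proof -
  have "(\<lambda>n::nat. if n \<ge> 1 then ennreal ((1/2) ^ n) else 0) = (\<lambda>n. ennreal (init_weight n))"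
    by (auto simp: init_weight_def)
  then show ?thesis unfolding mu0_def by simp
qed

lemma init_weight_nonneg: "init_weight n \<ge> 0"
  by (simp add: init_weight_def)

lemma init_mass_nonneg: "init_mass n \<ge> 0"
  using admissible_seq_pos[OF adm, of n] by (auto simp: init_mass_def init_weight_def)

lemma summable_init_mass: "summable init_mass"
proof -
  have "(\<lambda>n. init_mass (Suc n)) = (\<lambda>n. x (Suc n) * (1/2) ^ Suc n)"
    by (simp add: fun_eq_iff init_mass_def init_weight_def)
  then show ?thesis using finite_mass summable_Suc_iff[of init_mass] by simp
qed

lemma total_init_mass_nonneg: "total_init_mass \<ge> 0"
  unfolding total_init_mass_def by (intro suminf_nonneg summable_init_mass init_mass_nonneg)

lemma nn_integral_mu0: "(\<integral>\<^sup>+ v. ennreal v \<partial>mu0 x) = ennreal total_init_mass"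
proof -
  have "(\<integral>\<^sup>+ v. ennreal v \<partial>mu0 x) = (\<integral>\<^sup>+ n. ennreal (init_weight n) * ennreal (x n) \<partial>count_space UNIV)"
    unfolding mu0_eq by (simp add: nn_integral_distr nn_integral_density)
  also have "\<dots> = (\<Sum>n. ennreal (init_mass n))"
    by (simp add: nn_integral_count_space_nat init_mass_def ennreal_mult' init_weight_nonneg)
  also have "\<dots> = ennreal total_init_mass"
    unfolding total_init_mass_def by (intro suminf_ennreal2 init_mass_nonneg summable_init_mass)
  finally show ?thesis .
qed

lemma AE_mu0_pos: "AE v in mu0 x. v > 0"
proof -
  have "AE n in init_counting. x n > 0"
    by (subst AE_density)
       (auto simp: AE_count_space init_weight_def admissible_seq_pos[OF adm] split: if_splits)
  then show ?thesis
    unfolding mu0_eq by (subst AE_distr_iff) auto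
qed

lemma
  shows integrable_mu0_id: "integrable (mu0 x) (\<lambda>v. v)"
    and integral_mu0_id: "integral\<^sup>L (mu0 x) (\<lambda>v. v) = total_init_mass"
proof -
  have m: "(\<lambda>v::real. v) \<in> borel_measurable (mu0 x)" by (simp add: mu0_eq)
  show "integrable (mu0 x) (\<lambda>v. v)"
    using AE_mu0_pos nn_integral_mu0 by (intro integrableI_nonneg[OF m]) (auto elim: eventually_mono)
  have "integral\<^sup>L (mu0 x) (\<lambda>v. v) = enn2real (\<integral>\<^sup>+ v. ennreal v \<partial>mu0 x)"
    using AE_mu0_pos by (intro integral_eq_nn_integral[OF m]) (auto elim: eventually_mono)
  then show "integral\<^sup>L (mu0 x) (\<lambda>v. v) = total_init_mass"
    using nn_integral_mu0 total_init_mass_nonneg by simp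
qed

lemma integral_mu0_finite:
  fixes f :: "real \<Rightarrow> real"
  assumes f: "f \<in> borel_measurable borel" and vanish: "\<And>i. i > n \<Longrightarrow> f (x i) = 0"
  shows "integral\<^sup>L (mu0 x) f = (\<Sum>i=1..n. init_weight i * f (x i))"
proof -
  have support: "{k. init_weight k *\<^sub>R f (x k) \<noteq> 0} \<subseteq> {1..n}"
    using vanish by (auto simp: init_weight_def) (meson not_le)
  have "integral\<^sup>L (mu0 x) f = integral\<^sup>L (count_space UNIV) (\<lambda>k. init_weight k *\<^sub>R f (x k))"
    unfolding mu0_eq using f
    by (simp add: integral_distr integral_density init_weight_nonneg)
  also have "\<dots> = (\<Sum>k | init_weight k *\<^sub>R f (x k) \<noteq> 0. init_weight k *\<^sub>R f (x k))"
    using finite_subset[OF support] by (simp add: lebesgue_integral_count_space_finite_support)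
  also have "\<dots> = (\<Sum>i=1..n. init_weight i * f (x i))"
    using support by (subst sum.mono_neutral_left[of "{1..n}"]) auto
  finally show ?thesis .
qed

section \<open>The mass is bounded by the initial mass\<close>

lemma coag_term_truncated_identity_nonpos:
  assumes R: "R \<ge> 1"
  shows "coag_term x M (\<lambda>v. v * indicator {..1} v) p
       + coag_term x M (\<lambda>v. v * indicator {1<..R} v) p \<le> 0"
proof (cases p)
  case (Pair u w)
  define T where "T v = v * indicator {..1} v + v * indicator {1<..R} v" for v :: real
  have T: "v > 0 \<Longrightarrow> T v = (if v \<le> R then v else 0)" for v
    using R by (auto simp: T_def indicator_def)
  have "coag_term x M (\<lambda>v. v * indicator {..1} v) p + coag_term x M (\<lambda>v. v * indicator {1<..R} v) p
      = (T (u + w) - T u - T w) * Kern x u w"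
    unfolding Pair coag_term_def T_def by (simp add: algebra_simps)
  also have "\<dots> \<le> 0"
  proof (cases "Kern x u w = 0")
    case False
    then have "u > 0" "w > 0" using Kern_nonzero_imp_pos[OF adm] by auto
    then have "T (u + w) - T u - T w \<le> 0" using T[of u] T[of w] T[of "u + w"] by auto
    then show ?thesis using Kern_nonneg[of x u w] by (simp add: mult_nonpos_nonneg)
  qed simp
  finally show ?thesis .
qed

lemma weak_form_le_if_coag_nonpos:
  assumes t: "t \<ge> 0" and f: "f \<in> test_fns" and g: "g \<in> test_fns"
    and nonpos: "\<And>s p. coag_term x (mu s) f p + coag_term x (mu s) g p \<le> 0"
  shows "(\<integral>v. f v \<partial>mu t) + (\<integral>v. g v \<partial>mu t) \<le> (\<integral>v. f v \<partial>mu0 x) + (\<integral>v. g v \<partial>mu0 x)"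
proof -
  define C where "C f s = (\<integral>p. coag_term x (mu s) f p \<partial>(mu s \<Otimes>\<^sub>M mu s))" for f s
  note wf = weak_form[OF t f, folded C_def] and wg = weak_form[OF t g, folded C_def]
  have pointwise: "C f s + C g s \<le> 0"
    if "integrable (mu s \<Otimes>\<^sub>M mu s) (coag_term x (mu s) f)"
       "integrable (mu s \<Otimes>\<^sub>M mu s) (coag_term x (mu s) g)" for s
  proof -
    have "C f s + C g s = (\<integral>p. coag_term x (mu s) f p + coag_term x (mu s) g p \<partial>(mu s \<Otimes>\<^sub>M mu s))"
      unfolding C_def using that by (rule Bochner_Integration.integral_add[symmetric])
    also have "\<dots> \<le> (\<integral>p. 0 \<partial>(mu s \<Otimes>\<^sub>M mu s))"
      using that nonpos by (intro integral_mono) auto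
    finally show ?thesis by simp
  qed
  have "AE s \<in> {0..t} in lborel. C f s + C g s \<le> 0"
    using wf(2) wg(2) by eventually_elim (auto intro: pointwise)
  then have "(LINT s:{0..t}|lborel. C f s + C g s) \<le> (LINT s:{0..t}|lborel. 0)"
    using set_integral_add(1)[OF wf(3) wg(3)]
    by (intro set_integral_mono_AE) (auto simp: set_integrable_def)
  then have "(LINT s:{0..t}|lborel. C f s) + (LINT s:{0..t}|lborel. C g s) \<le> 0"
    using set_integral_add(2)[OF wf(3) wg(3)] by (simp add: set_lebesgue_integral_def)
  then show ?thesis using wf(4) wg(4) by linarith
qed

lemma integrable_mu0_if_abs_le:
  assumes f: "f \<in> borel_measurable borel" and le: "\<And>v. \<bar>f v\<bar> \<le> \<bar>v\<bar>"
  shows "integrable (mu0 x) f"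
  by (rule Bochner_Integration.integrable_bound[OF integrable_mu0_id]) (use f le in \<open>auto simp: mu0_eq\<close>)

lemma truncated_identity_test_fn: "(\<lambda>v. v * indicator {1<..R} v) \<in> test_fns"
  unfolding test_fns_def
proof (intro UnI1 CollectI conjI)
  show "bounded (range (\<lambda>v. v * indicator {1<..R} v :: real))"
    unfolding bounded_iff by (intro exI[of _ "\<bar>R\<bar>"]) (auto simp: indicator_def)
  show "\<exists>B. compact B \<and> B \<subseteq> {0<..} \<and> (\<forall>v. v \<notin> B \<longrightarrow> v * indicator {1<..R} v = (0::real))"
    by (intro exI[of _ "{1..R}"]) (auto simp: indicator_def)
qed measurable

lemma truncated_mass_le:
  assumes t: "t \<ge> 0" and R: "R \<ge> 1"
  shows "(\<integral>\<^sup>+ v. ennreal (v * indicator {0<..R} v) \<partial>mu t) \<le> ennreal total_init_mass"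
proof -
  define f where "f v = v * indicator {..1} v" for v :: real
  define g where "g v = v * indicator {1<..R} v" for v :: real
  have f_test: "f \<in> test_fns" and g_test: "g \<in> test_fns"
    using truncated_identity_test_fn unfolding test_fns_def f_def g_def by auto
  have "f \<in> borel_measurable borel" "g \<in> borel_measurable borel"
    unfolding f_def g_def by measurable
  then have mu0_f: "integrable (mu0 x) f" and mu0_g: "integrable (mu0 x) g"
    by (auto intro!: integrable_mu0_if_abs_le simp: f_def g_def indicator_def)
  have fg: "f v + g v = (if v \<le> R then v else 0)" if "v > 0" for v
    using that R by (auto simp: f_def g_def indicator_def)
  have int_t: "integrable (mu t) f" "integrable (mu t) g"
    using weak_form(1)[OF t f_test] weak_form(1)[OF t g_test] .
  have "(\<integral>v. f v + g v \<partial>mu t) = (\<integral>v. f v \<partial>mu t) + (\<integral>v. g v \<partial>mu t)"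
    using int_t by simp
  also have "\<dots> \<le> (\<integral>v. f v \<partial>mu0 x) + (\<integral>v. g v \<partial>mu0 x)"
    using coag_term_truncated_identity_nonpos[OF R] unfolding f_def g_def
    by (rule weak_form_le_if_coag_nonpos[OF t f_test[unfolded f_def] g_test[unfolded g_def]])
  also have "\<dots> = (\<integral>v. f v + g v \<partial>mu0 x)"
    using mu0_f mu0_g by simp
  also have "\<dots> \<le> (\<integral>v. v \<partial>mu0 x)"
  proof (rule integral_mono_AE)
    show "AE v in mu0 x. f v + g v \<le> v"
      using AE_mu0_pos by eventually_elim (simp add: fg)
  qed (use mu0_f mu0_g integrable_mu0_id in auto)
  finally have le: "(\<integral>v. f v + g v \<partial>mu t) \<le> total_init_mass"
    by (simp add: integral_mu0_id)
  have "(\<integral>\<^sup>+ v. ennreal (v * indicator {0<..R} v) \<partial>mu t) = (\<integral>\<^sup>+ v. ennreal (f v + g v) \<partial>mu t)"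
    using AE_mu_pos[OF t] by (rule nn_integral_cong_AE[OF eventually_mono]) (simp add: fg)
  also have "\<dots> = ennreal (\<integral>v. f v + g v \<partial>mu t)"
    using AE_mu_pos[OF t] int_t
    by (intro nn_integral_eq_integral) (auto simp: fg elim: eventually_mono)
  finally show ?thesis using le by (simp add: ennreal_leI)
qed

lemma nn_integral_mass_le:
  assumes t: "t \<ge> 0"
  shows "(\<integral>\<^sup>+ v. ennreal v \<partial>mu t) \<le> ennreal total_init_mass"
proof -
  define F where "F j v = ennreal (v * indicator {0<..real (Suc j)} v)" for j v
  have "ennreal v = (SUP j. F j v)" for v
  proof (cases "v > 0")
    case True
    obtain n :: nat where "v \<le> real n" using real_arch_simple by blast
    then have "F n v = ennreal v" "\<And>j. F j v \<le> ennreal v"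
      using True by (auto simp: F_def indicator_def intro: ennreal_leI)
    then show ?thesis by (metis SUP_upper UNIV_I antisym SUP_least)
  qed (auto simp: F_def indicator_def ennreal_eq_0_iff)
  then have "(\<integral>\<^sup>+ v. ennreal v \<partial>mu t) = (\<integral>\<^sup>+ v. (SUP j. F j v) \<partial>mu t)" by simp
  also have "\<dots> = (SUP j. integral\<^sup>N (mu t) (F j))"
  proof (rule nn_integral_monotone_convergence_SUP)
    show "F j \<in> borel_measurable (mu t)" for j
      by (rule measurable_mu[OF t]) (unfold F_def, measurable)
  qed
    (auto simp: incseq_def le_fun_def F_def indicator_def intro!: ennreal_leI)
  also have "\<dots> \<le> ennreal total_init_mass"
    unfolding F_def using truncated_mass_le[OF t] by (intro SUP_least) simp
  finally show ?thesis .
qed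

lemma integrable_mass: "t \<ge> 0 \<Longrightarrow> integrable (mu t) (\<lambda>v. v)"
  using nn_integral_mass_le[of t] AE_mu_pos[of t] measurable_mu[of t "\<lambda>v. v"]
  by (intro integrableI_nonneg) (auto simp: le_less_trans elim: eventually_mono)

lemma integral_mass_le:
  assumes t: "t \<ge> 0"
  shows "(\<integral>v. v \<partial>mu t) \<le> total_init_mass"
proof -
  have "ennreal (\<integral>v. v \<partial>mu t) = (\<integral>\<^sup>+ v. ennreal v \<partial>mu t)"
    using AE_mu_pos[OF t]
    by (intro nn_integral_eq_integral[OF integrable_mass[OF t], symmetric]) (auto elim: eventually_mono)
  then show ?thesis
    using nn_integral_mass_le[OF t] total_init_mass_nonneg by (metis ennreal_le_iff)
qed

section \<open>The deficit of the low levels\<close>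

definition levels_upto :: "nat \<Rightarrow> real set" where
  "levels_upto n = {v. 1 \<le> nI x v \<and> nI x v \<le> n}"

definition mass_upto :: "nat \<Rightarrow> real \<Rightarrow> real" where
  "mass_upto n v = v * indicator (levels_upto n) v"

text \<open>\<^const>\<open>mass_upto\<close> is not a test function, since its support accumulates at \<open>0\<close> and
  is unbounded; the weak form is applied to its restrictions to windows instead.\<close>

definition windowed :: "nat \<Rightarrow> nat \<Rightarrow> real \<Rightarrow> real" where
  "windowed n j v = mass_upto n v * indicator (window j) v"

definition low_mass :: "nat \<Rightarrow> real \<Rightarrow> real" where
  "low_mass n t = (\<integral>v. mass_upto n v \<partial>mu t)"

definition level_mass :: "nat \<Rightarrow> real \<Rightarrow> real" where
  "level_mass n t = (\<integral>v. v * indicator {v. nI x v = n} v \<partial>mu t)"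

definition deficit :: "nat \<Rightarrow> real \<Rightarrow> real" where
  "deficit n t = (\<Sum>i=1..n. init_mass i) - low_mass n t"

definition flux :: "nat \<Rightarrow> real \<Rightarrow> real" where
  "flux n s = 8 ^ n * level_mass n s * mplus (Suc n) s"

definition windowed_rate :: "nat \<Rightarrow> nat \<Rightarrow> real \<Rightarrow> real" where
  "windowed_rate n j s = - (1/2) * (\<integral>p. coag_term x (mu s) (windowed n j) p \<partial>(mu s \<Otimes>\<^sub>M mu s))"

lemma sets_levels_upto[measurable]: "levels_upto n \<in> sets borel"
proof -
  have "levels_upto n = (\<Union>m\<in>{1..n}. {v. nI x v = m})" by (auto simp: levels_upto_def)
  then show ?thesis using sets_level[OF adm] by auto
qed

lemma borel_measurable_mass_upto[measurable]: "mass_upto n \<in> borel_measurable borel"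
  unfolding mass_upto_def[abs_def] by measurable

lemma borel_measurable_windowed[measurable]: "windowed n j \<in> borel_measurable borel"
  unfolding windowed_def[abs_def] window_def by measurable

lemma levels_upto_pos: "v \<in> levels_upto n \<Longrightarrow> v > 0"
  unfolding levels_upto_def using nI_pos_imp[OF adm] by auto

lemma mass_upto_nonneg: "mass_upto n v \<ge> 0"
  using levels_upto_pos[of v n] by (auto simp: mass_upto_def indicator_def)

lemma mass_upto_le: "mass_upto n v \<le> max 0 v"
  by (auto simp: mass_upto_def indicator_def)

lemma abs_windowed_le: "\<bar>windowed n j v\<bar> \<le> mass_upto n v"
  using mass_upto_nonneg[of n v] by (auto simp: windowed_def indicator_def)

lemma windowed_tendsto: "(\<lambda>j. windowed n j v) \<longlonglongrightarrow> mass_upto n v"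
proof (cases "v > 0")
  case True
  have "eventually (\<lambda>j. windowed n j v = mass_upto n v) sequentially"
    using eventually_in_window[OF True] by eventually_elim (simp add: windowed_def)
  then show ?thesis by (rule tendsto_eventually)
next
  case False
  then have "v \<notin> levels_upto n" using levels_upto_pos by force
  then show ?thesis by (simp add: windowed_def mass_upto_def)
qed

lemma windowed_test_fn: "windowed n j \<in> test_fns"
  unfolding test_fns_def
proof (intro UnI1 CollectI conjI)
  have "\<bar>windowed n j v\<bar> \<le> real (Suc j)" for v
    using abs_windowed_le[of n j v] mass_upto_le[of n v]
    by (cases "v \<in> window j") (auto simp: windowed_def window_def)
  then show "bounded (range (windowed n j))"
    unfolding bounded_iff by auto
  show "\<exists>B. compact B \<and> B \<subseteq> {0<..} \<and> (\<forall>v. v \<notin> B \<longrightarrow> windowed n j v = 0)"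
    using compact_window window_pos by (intro exI[of _ "window j"]) (auto simp: windowed_def)
qed simp

lemma emeasure_levels_upto_le:
  assumes t: "t \<ge> 0"
  shows "emeasure (mu t) (levels_upto n) \<le> ennreal (real n)"
proof -
  have "emeasure (mu t) (levels_upto n) = emeasure (mu t) (\<Union>m\<in>{1..n}. {v. nI x v = m})"
    by (auto simp: levels_upto_def intro: arg_cong[where f = "emeasure (mu t)"])
  also have "\<dots> \<le> (\<Sum>m\<in>{1..n}. emeasure (mu t) {v. nI x v = m})"
    using sets_level_mu[OF t] by (intro emeasure_subadditive_finite) auto
  also have "\<dots> \<le> (\<Sum>m\<in>{1..n}. ennreal 1)"
  proof (rule sum_mono)
    fix m assume m: "m \<in> {1..n}"
    have "mplus m t \<le> 1"
      using mplus_le[of m t] t m by (auto intro: order_trans[OF _ power_le_one])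
    then show "emeasure (mu t) {v. nI x v = m} \<le> ennreal 1" using levels m t by auto
  qed
  finally show ?thesis by (simp add: ennreal_of_nat_eq_real_of_nat)
qed

lemma measure_levels_upto_le: "t \<ge> 0 \<Longrightarrow> measure (mu t) (levels_upto n) \<le> real n"
  using emeasure_levels_upto_le[of t n] by (simp add: measure_def enn2real_leI)

lemma integrable_indicator_levels_upto:
  assumes t: "t \<ge> 0"
  shows "integrable (mu t) (indicator (levels_upto n) :: real \<Rightarrow> real)"
proof (rule integrable_real_indicator)
  show "levels_upto n \<in> sets (mu t)" using sets_mu[OF t] by simp
  show "emeasure (mu t) (levels_upto n) < \<infinity>"
    using emeasure_levels_upto_le[OF t, of n] by (simp add: le_less_trans)
qed

lemma integrable_mass_on:
  assumes t: "t \<ge> 0" and A: "A \<in> sets borel"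
  shows "integrable (mu t) (\<lambda>v. v * indicator A v)"
proof (rule Bochner_Integration.integrable_bound[OF integrable_mass[OF t]])
  note [measurable] = A
  show "(\<lambda>v. v * indicator A v) \<in> borel_measurable (mu t)"
    by (rule measurable_mu[OF t]) measurable
qed (auto simp: indicator_def)

lemma integral_mass_on_le:
  assumes t: "t \<ge> 0" and A: "A \<in> sets borel"
  shows "(\<integral>v. v * indicator A v \<partial>mu t) \<le> total_init_mass"
proof -
  have "(\<integral>v. v * indicator A v \<partial>mu t) \<le> (\<integral>v. v \<partial>mu t)"
    using AE_mu_pos[OF t]
    by (intro integral_mono_AE[OF integrable_mass_on[OF t A] integrable_mass[OF t]])
       (auto simp: indicator_def elim: eventually_mono)
  then show ?thesis using integral_mass_le[OF t] by linarith
qed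

lemma integrable_mass_upto: "t \<ge> 0 \<Longrightarrow> integrable (mu t) (mass_upto n)"
  unfolding mass_upto_def[abs_def] using integrable_mass_on sets_levels_upto by blast

lemma low_mass_le_mass:
  assumes t: "t \<ge> 0"
  shows "ennreal (low_mass n t) \<le> (\<integral>\<^sup>+ v. ennreal v \<partial>mu t)"
proof -
  have "ennreal (low_mass n t) = (\<integral>\<^sup>+ v. ennreal (mass_upto n v) \<partial>mu t)"
    unfolding low_mass_def using mass_upto_nonneg
    by (intro nn_integral_eq_integral[OF integrable_mass_upto[OF t], symmetric]) auto
  also have "\<dots> \<le> (\<integral>\<^sup>+ v. ennreal v \<partial>mu t)"
  proof (rule nn_integral_mono)
    fix v
    show "ennreal (mass_upto n v) \<le> ennreal v"
      using mass_upto_le[of n v] mass_upto_nonneg[of n v]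
      by (cases "v \<ge> 0") (auto intro: ennreal_leI)
  qed
  finally show ?thesis .
qed

lemma integral_windowed_tendsto:
  assumes t: "t \<ge> 0"
  shows "(\<lambda>j. \<integral>v. windowed n j v \<partial>mu t) \<longlonglongrightarrow> low_mass n t"
  unfolding low_mass_def
proof (rule integral_dominated_convergence)
  show "integrable (mu t) (mass_upto n)" by (rule integrable_mass_upto[OF t])
  show "mass_upto n \<in> borel_measurable (mu t)" "windowed n j \<in> borel_measurable (mu t)" for j
    by (simp_all add: measurable_mu[OF t])
qed (use abs_windowed_le windowed_tendsto in auto)

lemma integral_mu0_windowed_tendsto:
  "(\<lambda>j. \<integral>v. windowed n j v \<partial>mu0 x) \<longlonglongrightarrow> (\<Sum>i=1..n. init_mass i)"
proof -
  have in_levels: "x i \<in> levels_upto n \<longleftrightarrow> 1 \<le> i \<and> i \<le> n" if "i \<ge> 1" for i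
    using nI_seq[OF adm that] by (simp add: levels_upto_def)
  have "(\<integral>v. windowed n j v \<partial>mu0 x) = (\<Sum>i=1..n. init_weight i * windowed n j (x i))" for j
    by (rule integral_mu0_finite[OF borel_measurable_windowed])
       (use in_levels in \<open>auto simp: windowed_def mass_upto_def\<close>)
  moreover have "(\<lambda>j. \<Sum>i=1..n. init_weight i * windowed n j (x i))
      \<longlonglongrightarrow> (\<Sum>i=1..n. init_weight i * mass_upto n (x i))"
    by (intro tendsto_sum tendsto_mult tendsto_const windowed_tendsto)
  moreover have "(\<Sum>i=1..n. init_weight i * mass_upto n (x i)) = (\<Sum>i=1..n. init_mass i)"
    using in_levels by (intro sum.cong) (auto simp: mass_upto_def init_mass_def)
  ultimately show ?thesis by simp
qed

lemma set_integrable_windowed_rate: "t \<ge> 0 \<Longrightarrow> set_integrable lborel {0..t} (windowed_rate n j)"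
  unfolding windowed_rate_def[abs_def]
  using weak_form(3)[OF _ windowed_test_fn] by (intro set_integrable_mult_right) auto

lemma set_integral_windowed_rate_tendsto:
  assumes t: "t \<ge> 0"
  shows "(\<lambda>j. LINT s:{0..t}|lborel. windowed_rate n j s) \<longlonglongrightarrow> deficit n t"
proof -
  have "(LINT s:{0..t}|lborel. windowed_rate n j s)
      = (\<integral>v. windowed n j v \<partial>mu0 x) - (\<integral>v. windowed n j v \<partial>mu t)" for j
    using weak_form(4)[OF t windowed_test_fn, of n j]
    unfolding windowed_rate_def set_integral_mult_right by simp
  then show ?thesis
    unfolding deficit_def
    using tendsto_diff[OF integral_mu0_windowed_tendsto integral_windowed_tendsto[OF t]] by simp
qed

definition outflow_density :: "nat \<Rightarrow> real \<times> real \<Rightarrow> real" where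
  "outflow_density n p =
     - (8 ^ n) * ((fst p * indicator {v. nI x v = n} (fst p)) * indicator {v. nI x v = Suc n} (snd p))
     - 8 ^ n * (indicator {v. nI x v = Suc n} (fst p) * (snd p * indicator {v. nI x v = n} (snd p)))"

definition coag_majorant :: "nat \<Rightarrow> real \<times> real \<Rightarrow> real" where
  "coag_majorant n p =
     2 * 8 ^ n * ((fst p * indicator (levels_upto (Suc n)) (fst p)) * indicator (levels_upto (Suc n)) (snd p))
     + 2 * 8 ^ n * (indicator (levels_upto (Suc n)) (fst p) * (snd p * indicator (levels_upto (Suc n)) (snd p)))"

lemma coag_majorant_nonneg: "coag_majorant n p \<ge> 0"
  using levels_upto_pos[of "fst p" "Suc n"] levels_upto_pos[of "snd p" "Suc n"]
  by (auto simp: coag_majorant_def indicator_def)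

lemma coag_term_mass_upto:
  assumes n: "n \<ge> 1"
  shows "coag_term x M (mass_upto n) (u, w) = outflow_density n (u, w)"
proof -
  consider "nI x u \<ge> 1 \<and> nI x w = Suc (nI x u)" | "nI x w \<ge> 1 \<and> nI x u = Suc (nI x w)"
    | "Kern x u w = 0"
    using Kern_eq[of x u w] by metis
  then show ?thesis
  proof cases
    case 1
    then have "nI x (u + w) = Suc (nI x u)" using nI_add_Suc[OF adm] by blast
    then show ?thesis using 1 n
      unfolding coag_term_def outflow_density_def mass_upto_def levels_upto_def
      by (auto simp: Kern_eq indicator_def)
  next
    case 2
    then have "nI x (u + w) = Suc (nI x w)" using nI_add_Suc[OF adm, of w _ u] by (simp add: add.commute)
    then show ?thesis using 2 n
      unfolding coag_term_def outflow_density_def mass_upto_def levels_upto_def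
      by (auto simp: Kern_eq indicator_def)
  next
    case 3
    then show ?thesis using n
      unfolding coag_term_def outflow_density_def by (auto simp: Kern_eq indicator_def split: if_splits)
  qed
qed

lemma abs_coag_term_le_majorant:
  assumes n: "n \<ge> 1" and f: "\<And>v. \<bar>f v\<bar> \<le> mass_upto n v"
  shows "\<bar>coag_term x M f (u, w)\<bar> \<le> coag_majorant n (u, w)"
proof (cases "Kern x u w = 0")
  case True
  then show ?thesis using coag_majorant_nonneg[of n "(u, w)"] by (simp add: coag_term_def)
next
  case False
  have pos: "u > 0" "w > 0" using Kern_nonzero_imp_pos[OF adm False] by auto
  obtain m where m: "m \<ge> 1" "(nI x u = m \<and> nI x w = Suc m) \<or> (nI x w = m \<and> nI x u = Suc m)"
    and K: "Kern x u w = 8 ^ m"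
    using False by (auto simp: Kern_eq split: if_splits)
  have sum: "nI x (u + w) = Suc m"
    using m nI_add_Suc[OF adm, of u m w] nI_add_Suc[OF adm, of w m u] by (auto simp: add.commute)
  show ?thesis
  proof (cases "m \<le> n")
    case False
    then have "mass_upto n u = 0" "mass_upto n w = 0" "mass_upto n (u + w) = 0"
      using m sum by (auto simp: mass_upto_def levels_upto_def)
    then show ?thesis
      using f[of u] f[of w] f[of "u + w"] coag_majorant_nonneg[of n "(u, w)"]
      by (simp add: coag_term_def)
  next
    case True
    then have "u \<in> levels_upto (Suc n)" "w \<in> levels_upto (Suc n)" using m by (auto simp: levels_upto_def)
    then have majorant: "coag_majorant n (u, w) = 2 * 8 ^ n * (u + w)"
      by (simp add: coag_majorant_def algebra_simps)
    have "mass_upto n v \<le> v" if "v > 0" for v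
      using mass_upto_le[of n v] that by simp
    then have "\<bar>f (u + w) - f u - f w\<bar> \<le> 2 * (u + w)"
      using f[of u] f[of w] f[of "u + w"] pos by (smt (verit))
    moreover have "(8::real) ^ m \<le> 8 ^ n" using True by (intro power_increasing) auto
    ultimately have "\<bar>f (u + w) - f u - f w\<bar> * 8 ^ m \<le> (2 * (u + w)) * 8 ^ n"
      using pos by (intro mult_mono) auto
    moreover have "\<bar>coag_term x M f (u, w)\<bar> = \<bar>f (u + w) - f u - f w\<bar> * 8 ^ m"
      by (simp add: coag_term_def K abs_mult)
    ultimately show ?thesis unfolding majorant by (simp add: algebra_simps)
  qed
qed

lemma
  assumes s: "s \<ge> 0"
  shows integrable_coag_majorant: "integrable (mu s \<Otimes>\<^sub>M mu s) (coag_majorant n)"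
    and integral_coag_majorant_le:
      "integral\<^sup>L (mu s \<Otimes>\<^sub>M mu s) (coag_majorant n) \<le> 4 * 8 ^ n * total_init_mass * real (Suc n)"
proof -
  let ?L = "levels_upto (Suc n)"
  note sf = sigma_finite_mu[OF s]
  have i1: "integrable (mu s) (\<lambda>v. v * indicator ?L v)" by (rule integrable_mass_on[OF s]) simp
  note i2 = integrable_indicator_levels_upto[OF s, of "Suc n"]
  note p1 = integrable_product[OF sf sf i1 i2] integral_product[OF sf sf i1 i2]
    and p2 = integrable_product[OF sf sf i2 i1] integral_product[OF sf sf i2 i1]
  have eq: "coag_majorant n = (\<lambda>p. 2 * 8 ^ n * ((fst p * indicator ?L (fst p)) * indicator ?L (snd p))
      + 2 * 8 ^ n * (indicator ?L (fst p) * (snd p * indicator ?L (snd p))))"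
    by (simp add: coag_majorant_def[abs_def])
  show "integrable (mu s \<Otimes>\<^sub>M mu s) (coag_majorant n)"
    unfolding eq using p1(1) p2(1) by auto
  have "integral\<^sup>L (mu s \<Otimes>\<^sub>M mu s) (coag_majorant n)
      = 4 * 8 ^ n * ((\<integral>v. v * indicator ?L v \<partial>mu s) * measure (mu s) ?L)"
    unfolding eq using p1 p2 sets_mu[OF s] emeasure_levels_upto_le[OF s, of "Suc n"]
    by (simp add: le_less_trans)
  also have "\<dots> \<le> 4 * 8 ^ n * (total_init_mass * real (Suc n))"
    using integral_mass_on_le[OF s, of ?L] measure_levels_upto_le[OF s, of "Suc n"]
      total_init_mass_nonneg
    by (intro mult_left_mono mult_mono) auto
  finally show "integral\<^sup>L (mu s \<Otimes>\<^sub>M mu s) (coag_majorant n) \<le> 4 * 8 ^ n * total_init_mass * real (Suc n)"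
    by simp
qed

lemma integral_outflow_density:
  assumes s: "s \<ge> 0" and n: "n \<ge> 1"
  shows "integral\<^sup>L (mu s \<Otimes>\<^sub>M mu s) (outflow_density n) = - 2 * flux n s"
proof -
  let ?A = "{v. nI x v = n}" and ?B = "{v. nI x v = Suc n}"
  note sf = sigma_finite_mu[OF s]
  have i1: "integrable (mu s) (\<lambda>v. v * indicator ?A v)"
    using sets_level[OF adm] by (intro integrable_mass_on[OF s])
  have fin: "emeasure (mu s) ?B < \<infinity>" using levels s by simp
  have i2: "integrable (mu s) (indicator ?B :: real \<Rightarrow> real)"
    using sets_level_mu[OF s] fin by (intro integrable_real_indicator)
  have m: "(\<integral>v. indicator ?B v \<partial>mu s) = mplus (Suc n) s"
    using sets_level_mu[OF s] fin measure_level[of "Suc n" s] s by simp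
  note p1 = integrable_product[OF sf sf i1 i2] integral_product[OF sf sf i1 i2]
    and p2 = integrable_product[OF sf sf i2 i1] integral_product[OF sf sf i2 i1]
  have eq: "outflow_density n = (\<lambda>p. - (8 ^ n) * ((fst p * indicator ?A (fst p)) * indicator ?B (snd p))
      - 8 ^ n * (indicator ?B (fst p) * (snd p * indicator ?A (snd p))))"
    by (simp add: outflow_density_def[abs_def])
  have "integral\<^sup>L (mu s \<Otimes>\<^sub>M mu s) (outflow_density n)
      = - (8 ^ n) * (level_mass n s * mplus (Suc n) s) - 8 ^ n * (mplus (Suc n) s * level_mass n s)"
    unfolding eq using p1 p2 m by (simp add: level_mass_def)
  then show ?thesis by (simp add: flux_def algebra_simps)
qed

lemma
  assumes s: "s \<ge> 0" and n: "n \<ge> 1"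
    and integrable: "\<And>j. integrable (mu s \<Otimes>\<^sub>M mu s) (coag_term x (mu s) (windowed n j))"
  shows windowed_rate_tendsto: "(\<lambda>j. windowed_rate n j s) \<longlonglongrightarrow> flux n s"
    and abs_windowed_rate_le: "\<bar>windowed_rate n j s\<bar> \<le> 2 * 8 ^ n * total_init_mass * real (Suc n)"
proof -
  let ?M = "mu s \<Otimes>\<^sub>M mu s"
  have eq: "coag_term x (mu s) (mass_upto n) = outflow_density n"
    using coag_term_mass_upto[OF n] by (auto simp: fun_eq_iff)
  have bound: "AE p in ?M. norm (coag_term x (mu s) (windowed n j) p) \<le> coag_majorant n p" for j
  proof (rule AE_I2)
    fix p :: "real \<times> real"
    show "norm (coag_term x (mu s) (windowed n j) p) \<le> coag_majorant n p"
      using abs_coag_term_le_majorant[OF n abs_windowed_le, where M = "mu s" and u = "fst p" and w = "snd p"]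
      by simp
  qed
  have "(\<lambda>j. integral\<^sup>L ?M (coag_term x (mu s) (windowed n j))) \<longlonglongrightarrow> integral\<^sup>L ?M (outflow_density n)"
    unfolding eq[symmetric]
  proof (rule integral_dominated_convergence[OF _ _ integrable_coag_majorant[OF s] _ bound])
    show "coag_term x (mu s) (mass_upto n) \<in> borel_measurable ?M"
      unfolding eq outflow_density_def[abs_def] by (rule measurable_mu_pair[OF s]) measurable
    show "AE p in ?M. (\<lambda>j. coag_term x (mu s) (windowed n j) p) \<longlonglongrightarrow> coag_term x (mu s) (mass_upto n) p"
      by (intro AE_I2) (auto simp: coag_term_def split: prod.split
          intro!: tendsto_mult tendsto_diff windowed_tendsto)
  qed (use integrable in auto)
  from tendsto_mult[OF tendsto_const this, of "- (1/2)"]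
  show "(\<lambda>j. windowed_rate n j s) \<longlonglongrightarrow> flux n s"
    unfolding windowed_rate_def integral_outflow_density[OF s n] by simp
  have "\<bar>integral\<^sup>L ?M (coag_term x (mu s) (windowed n j))\<bar>
      \<le> (\<integral>p. norm (coag_term x (mu s) (windowed n j) p) \<partial>?M)"
    using integral_norm_bound[of ?M "coag_term x (mu s) (windowed n j)"] by simp
  also have "\<dots> \<le> integral\<^sup>L ?M (coag_majorant n)"
    by (rule integral_mono_AE[OF _ integrable_coag_majorant[OF s] bound]) (use integrable in auto)
  finally show "\<bar>windowed_rate n j s\<bar> \<le> 2 * 8 ^ n * total_init_mass * real (Suc n)"
    using integral_coag_majorant_le[OF s, of n] by (simp add: windowed_rate_def abs_mult)
qed

lemma AE_windowed_rate:
  assumes t: "t \<ge> 0" and n: "n \<ge> 1"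
  shows "AE s in lborel. s \<in> {0..t} \<longrightarrow> (\<lambda>j. windowed_rate n j s) \<longlonglongrightarrow> flux n s
    \<and> (\<forall>j. \<bar>windowed_rate n j s\<bar> \<le> 2 * 8 ^ n * total_init_mass * real (Suc n))"
proof -
  have "\<forall>j. AE s in lborel. s \<in> {0..t} \<longrightarrow> integrable (mu s \<Otimes>\<^sub>M mu s) (coag_term x (mu s) (windowed n j))"
    using weak_form(2)[OF t windowed_test_fn] by blast
  then have "AE s in lborel. \<forall>j. s \<in> {0..t} \<longrightarrow> integrable (mu s \<Otimes>\<^sub>M mu s) (coag_term x (mu s) (windowed n j))"
    by (subst AE_all_countable)
  then show ?thesis
    by eventually_elim (use windowed_rate_tendsto[OF _ n] abs_windowed_rate_le[OF _ n] in auto)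
qed

lemma flux_nonneg: "s \<ge> 0 \<Longrightarrow> flux n s \<ge> 0"
  unfolding flux_def level_mass_def using mplus_nonneg[of "Suc n" s] AE_mu_pos[of s]
  by (intro mult_nonneg_nonneg integral_nonneg_AE) (auto simp: indicator_def elim: eventually_mono)

lemma deficit_le_flux_integral:
  assumes t: "t \<ge> 0" and n: "n \<ge> 1"
    and \<Psi>: "set_integrable lborel {0..t} \<Psi>" and le: "\<And>s. 0 \<le> s \<Longrightarrow> s \<le> t \<Longrightarrow> flux n s \<le> \<Psi> s"
  shows "deficit n t \<le> (LINT s:{0..t}|lborel. \<Psi> s)"
  using AE_windowed_rate[OF t n] le \<Psi> emeasure_lborel_Icc[OF t]
  by (intro set_integral_limit_le[where h = "windowed_rate n" and \<psi> = "flux n"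
        and C = "2 * 8 ^ n * total_init_mass * real (Suc n)"]
        set_integrable_windowed_rate[OF t] set_integral_windowed_rate_tendsto[OF t])
     (auto elim: eventually_mono)

lemma deficit_nonneg:
  assumes t: "t \<ge> 0" and n: "n \<ge> 1"
  shows "deficit n t \<ge> 0"
proof -
  have "- deficit n t \<le> (LINT s:{0..t}|lborel. 0)"
  proof (rule set_integral_limit_le[where h = "\<lambda>j s. - windowed_rate n j s" and \<psi> = "\<lambda>s. - flux n s"
        and C = "2 * 8 ^ n * total_init_mass * real (Suc n)"])
    show "(\<lambda>j. LINT s:{0..t}|lborel. - windowed_rate n j s) \<longlonglongrightarrow> - deficit n t"
      using tendsto_minus[OF set_integral_windowed_rate_tendsto[OF t]]
      by (simp add: set_lebesgue_integral_def)
  qed (use AE_windowed_rate[OF t n] set_integrable_windowed_rate[OF t] flux_nonneg emeasure_lborel_Icc[OF t]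
       in \<open>auto simp: set_integrable_def intro: tendsto_minus elim: eventually_mono\<close>)
  then show ?thesis by (simp add: set_lebesgue_integral_def)
qed

lemma level_mass_nonneg: "t \<ge> 0 \<Longrightarrow> level_mass n t \<ge> 0"
  unfolding level_mass_def using AE_mu_pos[of t]
  by (intro integral_nonneg_AE) (auto simp: indicator_def elim: eventually_mono)

lemma deficit_zero: "deficit 0 t = 0"
  by (simp add: deficit_def low_mass_def mass_upto_def levels_upto_def)

lemma deficit_Suc:
  assumes t: "t \<ge> 0"
  shows "deficit (Suc n) t = deficit n t + init_mass (Suc n) - level_mass (Suc n) t"
proof -
  have "mass_upto (Suc n) = (\<lambda>v. mass_upto n v + v * indicator {v. nI x v = Suc n} v)"
    by (auto simp: fun_eq_iff mass_upto_def levels_upto_def indicator_def)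
  then have "low_mass (Suc n) t = low_mass n t + level_mass (Suc n) t"
    unfolding low_mass_def level_mass_def
    using integrable_mass_upto[OF t] integrable_mass_on[OF t sets_level[OF adm]]
    by (simp add: Bochner_Integration.integral_add)
  then show ?thesis by (simp add: deficit_def)
qed

lemma deficit_even_step:
  assumes t: "t \<ge> 0" and k: "k \<ge> 1"
    and odd: "\<And>s. 0 \<le> s \<Longrightarrow> s \<le> t \<Longrightarrow> deficit (2 * k - 1) s \<le> \<beta>"
  shows "deficit (2 * k) t \<le> (init_mass (2 * k) + \<beta>) / 2"
proof -
  define C where "C = init_mass (2 * k) + \<beta>"
  define c :: real where "c = 16 ^ k"
  have even: "2 * k = Suc (2 * k - 1)" using k by simp
  have level_le: "level_mass (2 * k) s \<le> C" if s: "0 \<le> s" "s \<le> t" for s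
    using deficit_Suc[OF s(1), of "2 * k - 1"] deficit_nonneg[OF s(1), of "2 * k"] odd[OF s] k
    by (simp add: C_def flip: even)
  have C: "C \<ge> 0" using level_le[of 0] level_mass_nonneg[of 0 "2 * k"] t by simp
  have "flux (2 * k) s \<le> C / 2 * (c * exp (- c * s))" if s: "0 \<le> s" "s \<le> t" for s
  proof -
    have "flux (2 * k) s \<le> 8 ^ (2 * k) * C * ((1/2) ^ (2 * k + 1) * exp (- c * s))"
      unfolding flux_def c_def
      using level_le[OF s] level_mass_nonneg[OF s(1), of "2 * k"] mplus_odd_decay[OF s(1), of k]
        mplus_nonneg[of "2 * k + 1" s] s C
      by (intro mult_mono mult_left_mono) auto
    also have "\<dots> = C / 2 * ((8 ^ (2 * k) * (1/2) ^ (2 * k)) * exp (- c * s))"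
      by simp
    finally show ?thesis unfolding pow_8_mult_pow_half c_def .
  qed
  moreover have "c > 0" by (simp add: c_def)
  ultimately have "deficit (2 * k) t \<le> (LINT s:{0..t}|lborel. C / 2 * (c * exp (- c * s)))"
    using set_integral_exp_decay(1)[OF t] k
    by (intro deficit_le_flux_integral[OF t]) auto
  also have "\<dots> \<le> C / 2"
    using set_integral_exp_decay(2)[OF t \<open>c > 0\<close>] C by (simp add: mult_left_le)
  finally show ?thesis by (simp add: C_def)
qed

primrec deficit_bound :: "nat \<Rightarrow> real" where
  "deficit_bound 0 = 0"
| "deficit_bound (Suc k) = (init_mass (2 * k + 2) + init_mass (2 * k + 1) + deficit_bound k) / 2"

lemma deficit_even_le: "t \<ge> 0 \<Longrightarrow> deficit (2 * k) t \<le> deficit_bound k"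
proof (induction k arbitrary: t)
  case 0
  then show ?case by (simp add: deficit_zero)
next
  case (Suc k)
  have "deficit (2 * Suc k - 1) s \<le> init_mass (2 * k + 1) + deficit_bound k" if "0 \<le> s" for s
    using deficit_Suc[OF that, of "2 * k"] Suc.IH[OF that] level_mass_nonneg[OF that, of "Suc (2 * k)"]
    by simp
  then have "deficit (2 * Suc k) t \<le> (init_mass (2 * Suc k) + (init_mass (2 * k + 1) + deficit_bound k)) / 2"
    by (intro deficit_even_step[OF Suc.prems]) auto
  then show ?case by (simp add: algebra_simps)
qed

lemma deficit_bound_tendsto_zero: "deficit_bound \<longlonglongrightarrow> 0"
proof (rule halving_recursion_tendsto_zero)
  have "init_mass \<longlonglongrightarrow> 0" by (rule summable_LIMSEQ_zero[OF summable_init_mass])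
  moreover have "strict_mono (\<lambda>k::nat. 2 * k + 2)" "strict_mono (\<lambda>k::nat. 2 * k + 1)"
    by (auto intro: strict_monoI)
  ultimately show "(\<lambda>k. init_mass (2 * k + 2) + init_mass (2 * k + 1)) \<longlonglongrightarrow> 0"
    using LIMSEQ_subseq_LIMSEQ tendsto_add[of _ 0 _ _ 0] by (fastforce simp: o_def)
  show "deficit_bound k \<ge> 0" for k
    by (induction k) (auto intro!: add_nonneg_nonneg init_mass_nonneg)
qed simp

lemma nn_integral_mass_ge:
  assumes t: "t \<ge> 0"
  shows "ennreal total_init_mass \<le> (\<integral>\<^sup>+ v. ennreal v \<partial>mu t)"
proof (rule LIMSEQ_le_const2)
  have partial: "(\<Sum>i=1..n. init_mass i) = (\<Sum>i<Suc n. init_mass i)" for n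
    by (induction n) (simp_all add: init_mass_def init_weight_def)
  have "(\<lambda>n. \<Sum>i<n. init_mass i) \<longlonglongrightarrow> total_init_mass"
    unfolding total_init_mass_def by (rule summable_LIMSEQ[OF summable_init_mass])
  moreover have "strict_mono (\<lambda>k::nat. Suc (2 * k))" by (auto intro: strict_monoI)
  ultimately have "(\<lambda>k. \<Sum>i=1..2 * k. init_mass i) \<longlonglongrightarrow> total_init_mass"
    unfolding partial using LIMSEQ_subseq_LIMSEQ by (fastforce simp: o_def)
  from tendsto_diff[OF this deficit_bound_tendsto_zero]
  show "(\<lambda>k. ennreal ((\<Sum>i=1..2 * k. init_mass i) - deficit_bound k)) \<longlonglongrightarrow> ennreal total_init_mass"
    by (auto intro: tendsto_ennrealI)
  have "ennreal ((\<Sum>i=1..2 * k. init_mass i) - deficit_bound k) \<le> ennreal (low_mass (2 * k) t)" for k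
    using deficit_even_le[OF t, of k] by (intro ennreal_leI) (simp add: deficit_def)
  then show "\<exists>N. \<forall>k\<ge>N. ennreal ((\<Sum>i=1..2 * k. init_mass i) - deficit_bound k) \<le> (\<integral>\<^sup>+ v. ennreal v \<partial>mu t)"
    using low_mass_le_mass[OF t] order_trans by blast
qed

theorem mass_conserved:
  assumes "t \<ge> 0"
  shows "(\<integral>\<^sup>+ v. ennreal v \<partial>mu t) = (\<integral>\<^sup>+ v. ennreal v \<partial>mu0 x)"
  using nn_integral_mass_le[OF assms] nn_integral_mass_ge[OF assms] nn_integral_mu0 by simp

end

theorem proposition3p2:
  fixes x :: "nat \<Rightarrow> real"
    and mM :: "nat \<Rightarrow> nat \<Rightarrow> real \<Rightarrow> real"
    and mplus :: "nat \<Rightarrow> real \<Rightarrow> real"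
    and mu :: "real \<Rightarrow> real measure"
  assumes adm: "admissible_seq x"
    and mM_sol: "\<forall>M\<ge>1. ode_sol (mM M) \<and>
                   (\<forall>n\<ge>1. mM M n 0 = (if n \<le> M then (1/2) ^ n else 0))"
    and mplus_lim: "\<forall>n\<ge>1. \<forall>t\<ge>0. (\<lambda>N. mM (2 * N) n t) \<longlonglongrightarrow> mplus n t"
    and finite_mass: "summable (\<lambda>n. x (Suc n) * (1/2) ^ Suc n)"
    and sol: "smol_solution x mu"
    and supp: "\<forall>t\<ge>0. emeasure (mu t) (- Iset x) = 0"
    and levels: "\<forall>n\<ge>1. \<forall>t\<ge>0. emeasure (mu t) {v. nI x v = n} = ennreal (mplus n t)"
  shows "\<forall>t\<ge>0. (\<integral>\<^sup>+ v. ennreal v \<partial>mu t) = (\<integral>\<^sup>+ v. ennreal v \<partial>mu0 x)"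
proof -
  interpret level_solution x mM mplus mu
    using adm mM_sol mplus_lim finite_mass sol levels by unfold_locales
  show ?thesis using mass_conserved by blast
qed

end
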